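(* Let $\Gamma_1,\Gamma_2\le\mathbb{Z}^D$ be subgroups and for $i=1,2$ let $\mathbf X_i=(X_i,\Sigma_i,\mu_i,T_i)$ be $\mathbb{Z}^D$-systems with $T_i^\gamma=\mathrm{id}$ for all $\gamma\in\Gamma_i$. Then for any joining $\pi_i:\mathbf Y=(Y,\Phi,\nu,S)\to\mathbf X_i$ ($i=1,2$), the $\sigma$-algebras $\pi_1^{-1}(\Sigma_1)$ and $\pi_2^{-1}(\Sigma_2)$ are relatively independent under $\nu$ over $\pi_1^{-1}(\Sigma_1^{T_1\upharpoonright(\Gamma_1+\Gamma_2)})$ and $\pi_2^{-1}(\Sigma_2^{T_2\upharpoonright(\Gamma_1+\Gamma_2)})$; i.e. for all $A_i\in\Sigma_i$, \[\nu(\pi_1^{-1}A_1\cap\pi_2^{-1}A_2)=\int_Y \big(\mathsf E_{\mu_1}(1_{A_1}\mid\Sigma_1^{T_1\upharpoonright(\Gamma_1+\Gamma_2)})\circ\pi_1\big)\big(\mathsf E_{\mu_2}(1_{A_2}\mid\Sigma_2^{T_2\upharpoonright(\Gamma_1+\Gamma_2)})\circ\pi_2\big)\,d\nu.\]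
   Context: For a subgroup $\Lambda\le\mathbb{Z}^D$, $\Sigma^{T\upharpoonright\Lambda}=\{A\in\Sigma:\mu(A\triangle T^\gamma A)=0\ \forall\gamma\in\Lambda\}$. A joining of $\mathbf X_1,\mathbf X_2$ is a $\mathbb{Z}^D$-system $\mathbf Y$ with factor maps $\pi_i:\mathbf Y\to\mathbf X_i$ (measurable, measure-pushing, equivariant) whose pulled-back $\sigma$-algebras together generate $\Phi$ mod null sets. *)

theory Defs
  imports "HOL-Probability.Probability"
begin

text \<open>Subgroups of Z^D, with Z^D rendered as the type int^'d ('d finite, D = CARD('d)).\<close>
definition add_subgroup :: "(int^'d) set \<Rightarrow> bool" where
  "add_subgroup G \<longleftrightarrow> 0 \<in> G \<and> (\<forall>a\<in>G. \<forall>b\<in>G. a + b \<in> G) \<and> (\<forall>a\<in>G. - a \<in> G)"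

definition subgroup_sum :: "(int^'d) set \<Rightarrow> (int^'d) set \<Rightarrow> (int^'d) set" where
  "subgroup_sum G H = {a + b | a b. a \<in> G \<and> b \<in> H}"

definition zd_system :: "'a measure \<Rightarrow> (int^'d \<Rightarrow> 'a \<Rightarrow> 'a) \<Rightarrow> bool" where
  "zd_system M T \<longleftrightarrow> prob_space M
     \<and> (\<forall>g. T g \<in> measurable M M \<and> distr M M (T g) = M)
     \<and> (\<forall>x\<in>space M. T 0 x = x)
     \<and> (\<forall>g h. \<forall>x\<in>space M. T (g + h) x = T g (T h x))"

definition inv_sets :: "'a measure \<Rightarrow> (int^'d \<Rightarrow> 'a \<Rightarrow> 'a) \<Rightarrow> (int^'d) set \<Rightarrow> 'a set set" where
  "inv_sets M T L = {A \<in> sets M. \<forall>g\<in>L.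
      measure M ((A - (T g -` A \<inter> space M)) \<union> ((T g -` A \<inter> space M) - A)) = 0}"

definition inv_alg :: "'a measure \<Rightarrow> (int^'d \<Rightarrow> 'a \<Rightarrow> 'a) \<Rightarrow> (int^'d) set \<Rightarrow> 'a measure" where
  "inv_alg M T L = sigma (space M) (inv_sets M T L)"

definition factor_map :: "'b measure \<Rightarrow> (int^'d \<Rightarrow> 'b \<Rightarrow> 'b) \<Rightarrow> 'a measure \<Rightarrow> (int^'d \<Rightarrow> 'a \<Rightarrow> 'a)
    \<Rightarrow> ('b \<Rightarrow> 'a) \<Rightarrow> bool" where
  "factor_map N S M T p \<longleftrightarrow> p \<in> measurable N M \<and> distr N M p = M
     \<and> (\<forall>g. AE y in N. p (S g y) = T g (p y))"

definition joining :: "'b measure \<Rightarrow> (int^'d \<Rightarrow> 'b \<Rightarrow> 'b)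
    \<Rightarrow> 'a measure \<Rightarrow> (int^'d \<Rightarrow> 'a \<Rightarrow> 'a) \<Rightarrow> ('b \<Rightarrow> 'a)
    \<Rightarrow> 'c measure \<Rightarrow> (int^'d \<Rightarrow> 'c \<Rightarrow> 'c) \<Rightarrow> ('b \<Rightarrow> 'c) \<Rightarrow> bool" where
  "joining N S M1 T1 p1 M2 T2 p2 \<longleftrightarrow> zd_system N S
     \<and> factor_map N S M1 T1 p1 \<and> factor_map N S M2 T2 p2
     \<and> (\<forall>B\<in>sets N. \<exists>C\<in>sigma_sets (space N)
            ({p1 -` A \<inter> space N | A. A \<in> sets M1} \<union> {p2 -` A \<inter> space N | A. A \<in> sets M2}).
          measure N ((B - C) \<union> (C - B)) = 0)"

end

theory Submission
  imports Defs
begin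

(* Write F2 for the sigma-algebra of (G1+G2)-invariant sets of X2.  The heart of the proof is
   a one-sided statement: for an integrable weight w \<ge> 0 on X1 and B in Sigma2,
     \<integral> w(p1) 1_B(p2) d\<nu> = \<integral> w(p1) E(1_B | F2)(p2) d\<nu>.
   To see it, push the measure w(p1)\<cdot>\<nu> forward along p2.  The image \<rho> is a finite measure,
   absolutely continuous w.r.t. \<mu>2, and invariant under T2^g for g in G1: both w(p1) and \<nu> are
   S^g-invariant because T1^g is the identity.  Hence the Radon-Nikodym density D of \<rho> is
   T2^g-invariant a.e. for g in G1, and trivially for g in G2 (where T2^g is the identity), so
   D is F2-measurable.  The defining property of conditional expectation then moves E(.|F2)
   inside \<integral> D \<cdot> 1_B d\<mu>2 = \<integral> 1_B d\<rho>.  The theorem follows by applying this twice: once with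
   the weight 1_A1, once (roles of the two systems exchanged) with the weight E(1_A2 | F2). *)

lemma add_subgroup_uminus: "add_subgroup G \<Longrightarrow> a \<in> G \<Longrightarrow> - a \<in> G"
  unfolding add_subgroup_def by auto

text \<open>The sum of subgroups is symmetric, so the invariant factors of both systems are taken
  with respect to the same group whichever system plays the role of the weight.\<close>

lemma subgroup_sum_comm: "subgroup_sum G H = subgroup_sum H G"
  unfolding subgroup_sum_def by (auto simp: add.commute; metis add.commute)

lemma zd_system_left_inverse:
  assumes "zd_system M T" "x \<in> space M"
  shows "T g (T (- g) x) = x"
  using assms unfolding zd_system_def by (metis add.right_inverse)

lemma factor_map_trivial_action:
  assumes "factor_map N S M T p" "\<forall>x\<in>space M. T g x = x"
  shows "AE y in N. f (p (S g y)) = f (p y)"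
proof -
  have p: "p \<in> measurable N M" and equivariant: "AE y in N. p (S g y) = T g (p y)"
    using assms(1) unfolding factor_map_def by auto
  show ?thesis
    using equivariant AE_space by eventually_elim (use assms(2) measurable_space[OF p] in auto)
qed

lemma measure_preimage_Int:
  assumes [measurable]: "p1 \<in> measurable N M1" "p2 \<in> measurable N M2"
    "A1 \<in> sets M1" "A2 \<in> sets M2"
  shows "measure N (p1 -` A1 \<inter> p2 -` A2 \<inter> space N) =
    (\<integral>y. indicator A1 (p1 y) * indicator A2 (p2 y) \<partial>N)"
proof -
  have "measure N (p1 -` A1 \<inter> p2 -` A2 \<inter> space N) =
      (\<integral>y. indicator (p1 -` A1 \<inter> p2 -` A2 \<inter> space N) y \<partial>N)"
    by (simp add: Int_absorb2 Int_assoc[symmetric])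
  also have "\<dots> = (\<integral>y. indicator A1 (p1 y) * indicator A2 (p2 y) \<partial>N)"
    by (rule Bochner_Integration.integral_cong) (auto simp: indicator_def)
  finally show ?thesis .
qed

section \<open>The sigma-algebra of invariant sets\<close>

lemma inv_sets_Pow_space: "inv_sets M T L \<subseteq> Pow (space M)"
  unfolding inv_sets_def using sets.sets_into_space by blast

lemma space_inv_alg [simp]: "space (inv_alg M T L) = space M"
  unfolding inv_alg_def by (rule space_measure_of[OF inv_sets_Pow_space])

lemma sets_inv_alg: "sets (inv_alg M T L) = sigma_sets (space M) (inv_sets M T L)"
  unfolding inv_alg_def by (rule sets_measure_of[OF inv_sets_Pow_space])

lemma sigma_finite_subalgebra_inv_alg:
  assumes "finite_measure M"
  shows "sigma_finite_subalgebra M (inv_alg M T L)"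
proof -
  have "sets (inv_alg M T L) \<subseteq> sets M"
    unfolding sets_inv_alg by (rule sets.sigma_sets_subset) (auto simp: inv_sets_def)
  then have "finite_measure_subalgebra M (inv_alg M T L)"
    using assms unfolding finite_measure_subalgebra_def finite_measure_subalgebra_axioms_def
      subalgebra_def by simp
  then show ?thesis by (rule finite_measure_subalgebra_is_sigma_finite)
qed

lemma cond_exp_indicator_inv_alg:
  assumes "prob_space M" and A: "A \<in> sets M"
  shows "integrable M (real_cond_exp M (inv_alg M T L) (indicator A))"
    and "AE x in M. 0 \<le> real_cond_exp M (inv_alg M T L) (indicator A) x"
proof -
  interpret prob_space M by (rule assms(1))
  interpret F: sigma_finite_subalgebra M "inv_alg M T L"
    by (intro sigma_finite_subalgebra_inv_alg) (rule finite_measure)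
  show "integrable M (real_cond_exp M (inv_alg M T L) (indicator A))"
    by (rule F.real_cond_exp_int(1), rule integrable_real_indicator[OF A])
      (simp add: emeasure_finite less_top[symmetric])
  show "AE x in M. 0 \<le> real_cond_exp M (inv_alg M T L) (indicator A) x"
    by (rule F.real_cond_exp_pos) (use A in auto)
qed

text \<open>A function that is a.e. invariant under every \<open>T g\<close>, \<open>g \<in> L\<close>, is measurable for the
  sigma-algebra of \<open>L\<close>-invariant sets: its superlevel sets are invariant mod null sets.\<close>

lemma invariant_borel_measurable_inv_alg:
  fixes f :: "'a \<Rightarrow> real"
  assumes f[measurable]: "f \<in> borel_measurable M"
    and T: "\<And>g. g \<in> L \<Longrightarrow> T g \<in> measurable M M"
    and invariant: "\<And>g. g \<in> L \<Longrightarrow> AE x in M. f (T g x) = f x"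
  shows "f \<in> borel_measurable (inv_alg M T L)"
  unfolding borel_measurable_iff_greater
proof
  fix t
  define U where "U = {x \<in> space M. t < f x}"
  have U[measurable]: "U \<in> sets M" unfolding U_def by measurable
  have "U \<in> inv_sets M T L"
    unfolding inv_sets_def
  proof (intro CollectI conjI ballI U)
    fix g assume g: "g \<in> L"
    note Tg[measurable] = T[OF g]
    define X where "X = (U - (T g -` U \<inter> space M)) \<union> ((T g -` U \<inter> space M) - U)"
    have "X \<in> sets M" unfolding X_def by measurable
    moreover have "AE x in M. x \<notin> X"
      using invariant[OF g] AE_space
      by eventually_elim (use measurable_space[OF Tg] in \<open>auto simp: X_def U_def\<close>)
    ultimately have "X \<in> null_sets M" by (simp add: AE_iff_null_sets)
    then show "measure M ((U - (T g -` U \<inter> space M)) \<union> ((T g -` U \<inter> space M) - U)) = 0"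
      unfolding X_def[symmetric] by (simp add: measure_def null_setsD1)
  qed
  then show "{x \<in> space (inv_alg M T L). t < f x} \<in> sets (inv_alg M T L)"
    by (simp add: sets_inv_alg U_def[symmetric])
qed

lemma (in sigma_finite_measure) density_invariant:
  fixes D :: "'a \<Rightarrow> ennreal"
  assumes D[measurable]: "D \<in> borel_measurable M"
    and [measurable]: "\<phi> \<in> measurable M M" "\<psi> \<in> measurable M M"
    and left_inverse: "\<And>x. x \<in> space M \<Longrightarrow> \<phi> (\<psi> x) = x"
    and M_preserved: "distr M M \<psi> = M"
    and DM_preserved: "distr (density M D) M \<psi> = density M D"
  shows "AE x in M. D (\<phi> x) = D x"
proof (rule density_unique)
  have "density M (\<lambda>x. D (\<phi> x)) = density (distr M M \<psi>) (\<lambda>x. D (\<phi> x))"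
    by (simp add: M_preserved)
  also have "\<dots> = distr (density M (\<lambda>x. D (\<phi> (\<psi> x)))) M \<psi>"
    by (rule density_distr) auto
  also have "density M (\<lambda>x. D (\<phi> (\<psi> x))) = density M D"
    by (rule density_cong) (auto simp: left_inverse)
  finally show "density M (\<lambda>x. D (\<phi> x)) = density M D"
    using DM_preserved by simp
qed auto

section \<open>Weighted image measures\<close>

definition weighted_image :: "'b measure \<Rightarrow> ('b \<Rightarrow> real) \<Rightarrow> 'c measure \<Rightarrow> ('b \<Rightarrow> 'c) \<Rightarrow> 'c measure"
  where "weighted_image N u M p = distr (density N (\<lambda>y. ennreal (u y))) M p"

lemma sets_weighted_image [simp]: "sets (weighted_image N u M p) = sets M"
  unfolding weighted_image_def by simp

lemma space_weighted_image [simp]: "space (weighted_image N u M p) = space M"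
  unfolding weighted_image_def by simp

lemma integral_weighted_image:
  fixes k :: "'c \<Rightarrow> real"
  assumes [measurable]: "u \<in> borel_measurable N" "p \<in> measurable N M" "k \<in> borel_measurable M"
    and "\<And>y. 0 \<le> u y"
  shows "integral\<^sup>L (weighted_image N u M p) k = (\<integral>y. u y * k (p y) \<partial>N)"
proof -
  have "integral\<^sup>L (weighted_image N u M p) k = (\<integral>y. k (p y) \<partial>density N (\<lambda>y. ennreal (u y)))"
    unfolding weighted_image_def by (rule integral_distr) simp_all
  also have "\<dots> = (\<integral>y. u y * k (p y) \<partial>N)"
    using assms(4) by (subst integral_density) auto
  finally show ?thesis .
qed

lemma weighted_image_finite:
  assumes [measurable]: "p \<in> measurable N M"
    and "integrable N u" "\<And>y. 0 \<le> u y"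
  shows "finite_measure (weighted_image N u M p)"
proof (rule finite_measureI)
  have [measurable]: "u \<in> borel_measurable N" using assms(2) by auto
  have "p -` space M \<inter> space N = space N"
    using measurable_space[of p N M] by auto
  then have "emeasure (weighted_image N u M p) (space M) = (\<integral>\<^sup>+ y. ennreal (u y) \<partial>N)"
    unfolding weighted_image_def by (simp add: emeasure_distr emeasure_density)
  also have "\<dots> < \<infinity>"
    using assms(2,3) unfolding integrable_iff_bounded by simp
  finally show "emeasure (weighted_image N u M p) (space (weighted_image N u M p)) \<noteq> \<infinity>"
    by simp
qed

lemma weighted_image_absolutely_continuous:
  assumes [measurable]: "p \<in> measurable N M" "u \<in> borel_measurable N"
    and image: "distr N M p = M"
  shows "absolutely_continuous M (weighted_image N u M p)"
  unfolding absolutely_continuous_def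
proof
  fix C assume C: "C \<in> null_sets M"
  then have [measurable]: "C \<in> sets M" by auto
  have "emeasure N (p -` C \<inter> space N) = 0"
    using C image by (metis emeasure_distr null_setsD1 assms(1) \<open>C \<in> sets M\<close>)
  then have "p -` C \<inter> space N \<in> null_sets N"
    by (intro null_setsI) measurable
  then have "p -` C \<inter> space N \<in> null_sets (density N (\<lambda>y. ennreal (u y)))"
    using absolutely_continuousI_density[of "\<lambda>y. ennreal (u y)" N]
    unfolding absolutely_continuous_def by auto
  then show "C \<in> null_sets (weighted_image N u M p)"
    unfolding weighted_image_def by (auto simp: null_sets_distr_iff)
qed

lemma weighted_image_invariant:
  assumes [measurable]: "u \<in> borel_measurable N" "p \<in> measurable N M"
    "s \<in> measurable N N" "t \<in> measurable M M"
    and N_preserved: "distr N N s = N"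
    and u_invariant: "AE y in N. u (s y) = u y"
    and intertwining: "AE y in N. p (s y) = t (p y)"
  shows "distr (weighted_image N u M p) M t = weighted_image N u M p"
proof -
  define W where "W = density N (\<lambda>y. ennreal (u y))"
  have [measurable]: "p \<in> measurable W M" "s \<in> measurable W N"
    unfolding W_def by simp_all
  have W_preserved: "distr W N s = W"
  proof -
    have "W = distr (density N (\<lambda>y. ennreal (u (s y)))) N s"
      using density_distr[of "\<lambda>y. ennreal (u y)" N s N] N_preserved by (simp add: W_def)
    also have "density N (\<lambda>y. ennreal (u (s y))) = W"
      unfolding W_def by (rule density_cong) (use u_invariant in auto)
    finally show ?thesis ..
  qed
  have "AE y in W. p (s y) = t (p y)"
    unfolding W_def by (subst AE_density) (auto intro: AE_mp[OF intertwining])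
  then have "distr (distr W M p) M t = distr W M (\<lambda>y. p (s y))"
    by (simp add: distr_distr comp_def distr_cong_AE)
  also have "\<dots> = distr (distr W N s) M p"
    by (simp add: distr_distr comp_def)
  finally show ?thesis
    unfolding weighted_image_def W_def[symmetric] W_preserved .
qed

lemma (in sigma_finite_measure) weighted_image_real_density:
  assumes [measurable]: "p \<in> measurable N M"
    and image: "distr N M p = M" and u: "integrable N u" "\<And>y. 0 \<le> u y"
  obtains D where "D \<in> borel_measurable M" "\<And>x. 0 \<le> D x" "integrable M D"
    and "density M (\<lambda>x. ennreal (D x)) = weighted_image N u M p"
proof -
  define \<rho> where "\<rho> = weighted_image N u M p"
  have finite: "finite_measure \<rho>"
    unfolding \<rho>_def using u by (intro weighted_image_finite) simp_all
  have ac: "absolutely_continuous M \<rho>" and sets_\<rho>: "sets \<rho> = sets M"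
    unfolding \<rho>_def using u(1) image by (auto intro: weighted_image_absolutely_continuous)
  obtain D where D[measurable]: "D \<in> borel_measurable M" and D_nonneg: "\<And>x. 0 \<le> D x"
    and RN_D: "AE x in M. RN_deriv M \<rho> x = ennreal (D x)"
    using real_RN_deriv[OF finite ac sets_\<rho>] by blast
  have density_D: "density M (\<lambda>x. ennreal (D x)) = \<rho>"
  proof -
    have "density M (\<lambda>x. ennreal (D x)) = density M (RN_deriv M \<rho>)"
      using RN_D by (intro density_cong) auto
    also have "\<dots> = \<rho>" by (rule density_RN_deriv[OF ac sets_\<rho>])
    finally show ?thesis .
  qed
  have "(\<integral>\<^sup>+ x. ennreal (D x) \<partial>M) = emeasure \<rho> (space \<rho>)"
    unfolding density_D[symmetric] by (simp add: emeasure_density)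
  also have "\<dots> < \<infinity>"
    using finite_measure.emeasure_finite[OF finite] by (simp add: less_top)
  finally have "integrable M D"
    unfolding integrable_iff_bounded using D_nonneg by simp
  with D D_nonneg density_D show ?thesis using that unfolding \<rho>_def by blast
qed

section \<open>Weights pulled back from a factor with trivial action\<close>

lemma factor_weighted_image_invariant_density:
  fixes N :: "'b measure" and S :: "int^'d::finite \<Rightarrow> 'b \<Rightarrow> 'b"
    and MA :: "'a measure" and TA :: "int^'d \<Rightarrow> 'a \<Rightarrow> 'a" and pa :: "'b \<Rightarrow> 'a"
    and MB :: "'c measure" and TB :: "int^'d \<Rightarrow> 'c \<Rightarrow> 'c" and pb :: "'b \<Rightarrow> 'c"
    and GA GB :: "(int^'d) set" and w :: "'a \<Rightarrow> real"
  assumes zN: "zd_system N S" and zB: "zd_system MB TB"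
    and fa: "factor_map N S MA TA pa" and fb: "factor_map N S MB TB pb"
    and sA: "add_subgroup GA"
    and idA: "\<forall>g\<in>GA. \<forall>x\<in>space MA. TA g x = x" and idB: "\<forall>g\<in>GB. \<forall>x\<in>space MB. TB g x = x"
    and w[measurable]: "w \<in> borel_measurable MA" and w_int: "integrable MA w"
    and w_nonneg: "\<And>x. 0 \<le> w x"
  obtains D where "D \<in> borel_measurable (inv_alg MB TB (subgroup_sum GA GB))" "\<And>x. 0 \<le> D x"
    and "integrable MB D" and "density MB (\<lambda>x. ennreal (D x)) = weighted_image N (\<lambda>y. w (pa y)) MB pb"
proof -
  define \<rho> where "\<rho> = weighted_image N (\<lambda>y. w (pa y)) MB pb"
  have [measurable]: "pa \<in> measurable N MA" "pb \<in> measurable N MB"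
    and imageA: "distr N MA pa = MA" and imageB: "distr N MB pb = MB"
    and eqB: "\<And>g. AE y in N. pb (S g y) = TB g (pb y)"
    using fa fb unfolding factor_map_def by auto
  have [measurable]: "\<And>g. S g \<in> measurable N N" and S_preserves: "\<And>g. distr N N (S g) = N"
    using zN unfolding zd_system_def by auto
  have "prob_space MB" and [measurable]: "\<And>g. TB g \<in> measurable MB MB"
    and TB_preserves: "\<And>g. distr MB MB (TB g) = MB"
    and TB_add: "\<And>g h x. x \<in> space MB \<Longrightarrow> TB (g + h) x = TB g (TB h x)"
    using zB unfolding zd_system_def by auto
  then interpret MB: prob_space MB by simp
  have "integrable N (\<lambda>y. w (pa y))"
    using w_int imageA integrable_distr_eq[of pa N MA w] by simp
  then obtain D where D[measurable]: "D \<in> borel_measurable MB" and D_nonneg: "\<And>x. 0 \<le> D x"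
    and "integrable MB D" and density_D: "density MB (\<lambda>x. ennreal (D x)) = \<rho>"
    using MB.weighted_image_real_density[of pb N "\<lambda>y. w (pa y)"] imageB w_nonneg
    unfolding \<rho>_def by auto
  text \<open>Invariance under \<open>GA\<close>: \<open>TB (- a)\<close> preserves \<open>\<rho>\<close>, and \<open>TB a\<close> is its inverse.\<close>
  have D_invariant_GA: "AE x in MB. D (TB a x) = D x" if a: "a \<in> GA" for a
  proof -
    have "AE y in N. w (pa (S (- a) y)) = w (pa y)"
      using idA add_subgroup_uminus[OF sA a] by (intro factor_map_trivial_action[OF fa]) auto
    then have "distr \<rho> MB (TB (- a)) = \<rho>"
      unfolding \<rho>_def by (intro weighted_image_invariant[OF _ _ _ _ S_preserves _ eqB]) measurable
    then have "AE x in MB. ennreal (D (TB a x)) = ennreal (D x)"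
      using zd_system_left_inverse[OF zB] TB_preserves density_D
      by (intro MB.density_invariant) auto
    then show ?thesis by (rule AE_mp) (auto simp: D_nonneg)
  qed
  text \<open>Invariance under \<open>GA + GB\<close>, since \<open>TB (a + b) = TB a\<close> for \<open>b \<in> GB\<close>.\<close>
  have "AE x in MB. D (TB g x) = D x" if g: "g \<in> subgroup_sum GA GB" for g
  proof -
    obtain a b where ab: "g = a + b" "a \<in> GA" "b \<in> GB"
      using g unfolding subgroup_sum_def by auto
    show ?thesis
      using D_invariant_GA[OF ab(2)] AE_space by eventually_elim (use ab idB TB_add in auto)
  qed
  then have "D \<in> borel_measurable (inv_alg MB TB (subgroup_sum GA GB))"
    by (intro invariant_borel_measurable_inv_alg) auto
  then show ?thesis using that D_nonneg \<open>integrable MB D\<close> density_D unfolding \<rho>_def by blast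
qed

lemma integral_factor_weight_cond_exp:
  fixes N :: "'b measure" and S :: "int^'d::finite \<Rightarrow> 'b \<Rightarrow> 'b"
    and MA :: "'a measure" and TA :: "int^'d \<Rightarrow> 'a \<Rightarrow> 'a" and pa :: "'b \<Rightarrow> 'a"
    and MB :: "'c measure" and TB :: "int^'d \<Rightarrow> 'c \<Rightarrow> 'c" and pb :: "'b \<Rightarrow> 'c"
    and GA GB :: "(int^'d) set" and w :: "'a \<Rightarrow> real"
  assumes zN: "zd_system N S" and zB: "zd_system MB TB"
    and fa: "factor_map N S MA TA pa" and fb: "factor_map N S MB TB pb"
    and sA: "add_subgroup GA"
    and idA: "\<forall>g\<in>GA. \<forall>x\<in>space MA. TA g x = x" and idB: "\<forall>g\<in>GB. \<forall>x\<in>space MB. TB g x = x"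
    and w[measurable]: "w \<in> borel_measurable MA" and w_int: "integrable MA w"
    and w_nonneg: "\<And>x. 0 \<le> w x"
    and B[measurable]: "B \<in> sets MB"
  shows "(\<integral>y. w (pa y) * indicator B (pb y) \<partial>N) =
    (\<integral>y. w (pa y) * real_cond_exp MB (inv_alg MB TB (subgroup_sum GA GB)) (indicator B) (pb y) \<partial>N)"
proof -
  define F where "F = inv_alg MB TB (subgroup_sum GA GB)"
  define \<rho> where "\<rho> = weighted_image N (\<lambda>y. w (pa y)) MB pb"
  have [measurable]: "pa \<in> measurable N MA" "pb \<in> measurable N MB"
    using fa fb unfolding factor_map_def by auto
  have "prob_space MB" using zB unfolding zd_system_def by auto
  then interpret F: sigma_finite_subalgebra MB F
    unfolding F_def by (intro sigma_finite_subalgebra_inv_alg) (rule prob_space.finite_measure)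
  obtain D where D_F[measurable]: "D \<in> borel_measurable F" and D_nonneg: "\<And>x. 0 \<le> D x"
    and D_int: "integrable MB D" and density_D: "density MB (\<lambda>x. ennreal (D x)) = \<rho>"
    using factor_weighted_image_invariant_density[OF zN zB fa fb sA idA idB w w_int w_nonneg] unfolding F_def \<rho>_def by blast
  have [measurable]: "D \<in> borel_measurable MB"
    by (rule measurable_from_subalg[OF F.subalg D_F])
  have integral_\<rho>: "(\<integral>y. w (pa y) * k (pb y) \<partial>N) = (\<integral>x. D x * k x \<partial>MB)"
    if [measurable]: "k \<in> borel_measurable MB" for k
    using integral_weighted_image[of "\<lambda>y. w (pa y)" N pb MB k] w_nonneg
      integral_density[of k MB D] density_D D_nonneg
    unfolding \<rho>_def by simp
  have "integrable MB (\<lambda>x. D x * indicator B x)"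
    using integrable_mult_indicator[OF B D_int] by (simp add: mult.commute)
  then show ?thesis
    using F.real_cond_exp_intg(2)[of D "indicator B"] integral_\<rho> unfolding F_def[symmetric]
    by simp
qed

text \<open>The same with a weight that is only a.e. nonnegative: replace it by its positive part,
  which agrees with it a.e. on \<open>MA\<close> and hence, through the factor map, a.e. on \<open>N\<close>.\<close>

lemma integral_factor_weight_cond_exp_AE:
  fixes N :: "'b measure" and S :: "int^'d::finite \<Rightarrow> 'b \<Rightarrow> 'b"
    and MA :: "'a measure" and TA :: "int^'d \<Rightarrow> 'a \<Rightarrow> 'a" and pa :: "'b \<Rightarrow> 'a"
    and MB :: "'c measure" and TB :: "int^'d \<Rightarrow> 'c \<Rightarrow> 'c" and pb :: "'b \<Rightarrow> 'c"
    and GA GB :: "(int^'d) set" and w :: "'a \<Rightarrow> real"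
  assumes zN: "zd_system N S" and zB: "zd_system MB TB"
    and fa: "factor_map N S MA TA pa" and fb: "factor_map N S MB TB pb"
    and sA: "add_subgroup GA"
    and idA: "\<forall>g\<in>GA. \<forall>x\<in>space MA. TA g x = x" and idB: "\<forall>g\<in>GB. \<forall>x\<in>space MB. TB g x = x"
    and w[measurable]: "w \<in> borel_measurable MA" and w_int: "integrable MA w"
    and w_nonneg: "AE x in MA. 0 \<le> w x"
    and B[measurable]: "B \<in> sets MB"
  shows "(\<integral>y. w (pa y) * indicator B (pb y) \<partial>N) =
    (\<integral>y. w (pa y) * real_cond_exp MB (inv_alg MB TB (subgroup_sum GA GB)) (indicator B) (pb y) \<partial>N)"
proof -
  define w' where "w' = (\<lambda>x. max (w x) 0)"
  have [measurable]: "w' \<in> borel_measurable MA" "pa \<in> measurable N MA" "pb \<in> measurable N MB"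
    and imageA: "distr N MA pa = MA"
    using fa fb unfolding w'_def factor_map_def by auto
  have "AE x in distr N MA pa. w x = w' x"
    unfolding imageA using w_nonneg by eventually_elim (simp add: w'_def)
  then have w_w': "AE y in N. w (pa y) = w' (pa y)"
    by (subst (asm) AE_distr_iff) (auto simp: w'_def)
  have weight_cong: "(\<integral>y. w (pa y) * k (pb y) \<partial>N) = (\<integral>y. w' (pa y) * k (pb y) \<partial>N)"
    if [measurable]: "k \<in> borel_measurable MB" for k
    by (rule integral_cong_AE) (measurable, rule AE_mp[OF w_w'], auto intro!: AE_I2)
  have "integrable MA w'"
    unfolding w'_def by (rule integrable_max[OF w_int]) simp
  then show ?thesis
    using integral_factor_weight_cond_exp[OF zN zB fa fb sA idA idB, of w' B]
    by (simp add: weight_cong w'_def)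
qed

theorem lemma4:
  fixes G1 G2 :: "(int^'d::finite) set"
    and M1 :: "'a measure" and T1 :: "int^'d \<Rightarrow> 'a \<Rightarrow> 'a"
    and M2 :: "'c measure" and T2 :: "int^'d \<Rightarrow> 'c \<Rightarrow> 'c"
    and N :: "'b measure" and S :: "int^'d \<Rightarrow> 'b \<Rightarrow> 'b"
    and p1 :: "'b \<Rightarrow> 'a" and p2 :: "'b \<Rightarrow> 'c"
  assumes "add_subgroup G1" "add_subgroup G2"
    and "zd_system M1 T1" "zd_system M2 T2"
    and "\<forall>g\<in>G1. \<forall>x\<in>space M1. T1 g x = x" "\<forall>g\<in>G2. \<forall>x\<in>space M2. T2 g x = x"
    and "joining N S M1 T1 p1 M2 T2 p2"
    and "A1 \<in> sets M1" "A2 \<in> sets M2"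
  shows "measure N (p1 -` A1 \<inter> p2 -` A2 \<inter> space N) =
    (\<integral>y. real_cond_exp M1 (inv_alg M1 T1 (subgroup_sum G1 G2)) (indicator A1) (p1 y)
        * real_cond_exp M2 (inv_alg M2 T2 (subgroup_sum G1 G2)) (indicator A2) (p2 y) \<partial>N)"
proof -
  note [measurable] = assms(8,9)
  have zN: "zd_system N S" and f1: "factor_map N S M1 T1 p1" and f2: "factor_map N S M2 T2 p2"
    using assms(7) unfolding joining_def by auto
  have [measurable]: "p1 \<in> measurable N M1" "p2 \<in> measurable N M2"
    using f1 f2 unfolding factor_map_def by auto
  have P1: "prob_space M1" and P2: "prob_space M2"
    using assms(3,4) unfolding zd_system_def by auto
  interpret M1: prob_space M1 by (rule P1)
  define E1 where "E1 = real_cond_exp M1 (inv_alg M1 T1 (subgroup_sum G1 G2)) (indicator A1)"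
  define E2 where "E2 = real_cond_exp M2 (inv_alg M2 T2 (subgroup_sum G1 G2)) (indicator A2)"
  have "measure N (p1 -` A1 \<inter> p2 -` A2 \<inter> space N) =
      (\<integral>y. indicator A1 (p1 y) * indicator A2 (p2 y) \<partial>N)"
    by (rule measure_preimage_Int) measurable
  also have "\<dots> = (\<integral>y. indicator A1 (p1 y) * E2 (p2 y) \<partial>N)"
    unfolding E2_def using M1.emeasure_finite
    by (intro integral_factor_weight_cond_exp_AE[OF zN assms(4) f1 f2 assms(1,5,6)])
      (auto intro: integrable_real_indicator simp: less_top[symmetric])
  also have "\<dots> = (\<integral>y. E2 (p2 y) * E1 (p1 y) \<partial>N)"
    unfolding E1_def E2_def subgroup_sum_comm[of G1 G2] mult.commute[of "indicator A1 _"]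
    using cond_exp_indicator_inv_alg[OF P2 assms(9)]
    by (intro integral_factor_weight_cond_exp_AE[OF zN assms(3) f2 f1 assms(2,6,5)]) auto
  finally show ?thesis unfolding E1_def E2_def by (simp add: mult.commute)
qed

end
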